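(* A multi-head HyTN $\mathcal{H}$ is consistent if and only if it is conservative, i.e. contains no negative cycle. Moreover, if all weights of $\mathcal{H}$ are integers, then $\mathcal{H}$ admits an integral feasible scheduling $s:V\to\mathbb{Z}$ if and only if it is conservative.
   Context: A multi-head HyTN is a pair $\mathcal{H}=(V,\mathcal{A})$, $V$ a finite node set, $\mathcal{A}$ a finite set of hyperarcs $A=(t_A,H_A,w_A)$ with tail $t_A\in V$, nonempty head set $H_A\subseteq V\setminus\{t_A\}$ and weights $w_A(v)\in\mathbb{R}$ for $v\in H_A$. A scheduling $s:V\to\mathbb{R}$ is feasible if $s(t_A)\ge\min_{v\in H_A}\{s(v)-w_A(v)\}$ for all $A\in\mathcal{A}$; $\mathcal{H}$ is consistent if a feasible scheduling exists. A cycle is a pair $(S,\mathcal{C})$ with $S\subseteq V$, $\mathcal{C}\subseteq\mathcal{A}$, such that $S=\bigcup_{A\in\mathcal{C}}(H_A\cup\{t_A\})\neq\emptyset$ and for every $v\in S$ there is a unique $A\in\mathcal{C}$ with $t_A=v$, denoted $a(v)$. A finite cyclic sequence is a sequence $v_1,\ldots,v_p$ of nodes of $S$ with $v_{t+1}\in H_{a(v_t)}$ for $1\le t<p$, $v_p=v_1$, and no other repeated node. The cycle is negative if every finite cyclic sequence satisfies $\sum_{t=1}^{p-1}w_{a(v_t)}(v_{t+1})<0$. $\mathcal{H}$ is conservative if it has no negative cycle. *)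

theory Defs
  imports Main "HOL.Real"
begin

type_synonym 'a hyperarc = "'a \<times> 'a set \<times> ('a \<Rightarrow> real)"

definition tl_arc :: "'a hyperarc \<Rightarrow> 'a" where "tl_arc A = fst A"
definition hd_arc :: "'a hyperarc \<Rightarrow> 'a set" where "hd_arc A = fst (snd A)"
definition wt_arc :: "'a hyperarc \<Rightarrow> 'a \<Rightarrow> real" where "wt_arc A = snd (snd A)"

definition hytn :: "'a set \<Rightarrow> 'a hyperarc set \<Rightarrow> bool" where
  "hytn V As \<longleftrightarrow> finite V \<and> finite As \<and>
     (\<forall>A\<in>As. tl_arc A \<in> V \<and> hd_arc A \<noteq> {} \<and> hd_arc A \<subseteq> V - {tl_arc A})"

definition feasible :: "'a set \<Rightarrow> 'a hyperarc set \<Rightarrow> ('a \<Rightarrow> real) \<Rightarrow> bool" where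
  "feasible V As s \<longleftrightarrow>
     (\<forall>A\<in>As. s (tl_arc A) \<ge> Min ((\<lambda>v. s v - wt_arc A v) ` hd_arc A))"

definition consistent :: "'a set \<Rightarrow> 'a hyperarc set \<Rightarrow> bool" where
  "consistent V As \<longleftrightarrow> (\<exists>s. feasible V As s)"

definition int_consistent :: "'a set \<Rightarrow> 'a hyperarc set \<Rightarrow> bool" where
  "int_consistent V As \<longleftrightarrow> (\<exists>s :: 'a \<Rightarrow> int. feasible V As (\<lambda>v. real_of_int (s v)))"

definition is_cycle :: "'a set \<Rightarrow> 'a hyperarc set \<Rightarrow> 'a set \<Rightarrow> 'a hyperarc set \<Rightarrow> bool" where
  "is_cycle V As S C \<longleftrightarrow> C \<subseteq> As \<and>
     S = (\<Union>A\<in>C. hd_arc A \<union> {tl_arc A}) \<and> S \<noteq> {} \<and>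
     (\<forall>v\<in>S. \<exists>!A. A \<in> C \<and> tl_arc A = v)"

definition out_arc :: "'a hyperarc set \<Rightarrow> 'a \<Rightarrow> 'a hyperarc" where
  "out_arc C v = (THE A. A \<in> C \<and> tl_arc A = v)"

definition cyclic_seq :: "'a set \<Rightarrow> 'a hyperarc set \<Rightarrow> 'a list \<Rightarrow> bool" where
  "cyclic_seq S C vs \<longleftrightarrow> length vs \<ge> 2 \<and> set vs \<subseteq> S \<and>
     (\<forall>i. i + 1 < length vs \<longrightarrow> vs ! (i+1) \<in> hd_arc (out_arc C (vs ! i))) \<and>
     last vs = hd vs \<and> distinct (butlast vs)"

definition seq_weight :: "'a hyperarc set \<Rightarrow> 'a list \<Rightarrow> real" where
  "seq_weight C vs = (\<Sum>i<length vs - 1. wt_arc (out_arc C (vs ! i)) (vs ! (i+1)))"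

definition negative_cycle :: "'a set \<Rightarrow> 'a hyperarc set \<Rightarrow> 'a set \<Rightarrow> 'a hyperarc set \<Rightarrow> bool" where
  "negative_cycle V As S C \<longleftrightarrow> is_cycle V As S C \<and>
     (\<forall>vs. cyclic_seq S C vs \<longrightarrow> seq_weight C vs < 0)"

definition conservative :: "'a set \<Rightarrow> 'a hyperarc set \<Rightarrow> bool" where
  "conservative V As \<longleftrightarrow> \<not> (\<exists>S C. negative_cycle V As S C)"

end

theory Submission
  imports Defs
begin

text \<open>
  If s is feasible and (S, C) is a cycle, following from each node of S a head that witnesses
  feasibility of its out-arc yields a cyclic sequence along which the weights telescope to a
  non-negative sum, so no cycle is negative.

  Conversely, by induction on the number of hyperarcs, with all values in a fixed additive
  subgroup K of the reals (the reals or the integers). Two arcs with a common tail: solve the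
  instance without either one, shift one solution to agree with the other at that tail, and take
  the pointwise minimum. A head that is nobody's tail: drop its arc, solve, and lower the value
  at that head. Otherwise tails are unique and every head is a tail, so the arcs themselves form
  a cycle; it is not negative, so it has a cyclic sequence of non-negative weight, along which
  prefix sums of weights form a potential satisfying all arcs leaving the sequence. The rest is
  solved by induction, and the potential, shifted down far enough, is glued onto it.
\<close>

definition satisfies :: "('a \<Rightarrow> real) \<Rightarrow> 'a hyperarc \<Rightarrow> bool" where
  "satisfies s A \<longleftrightarrow> (\<exists>v\<in>hd_arc A. s v - wt_arc A v \<le> s (tl_arc A))"

lemma feasible_iff_satisfies:
  assumes "hytn V As"
  shows "feasible V As s \<longleftrightarrow> (\<forall>A\<in>As. satisfies s A)"
proof -
  have "Min ((\<lambda>v. s v - wt_arc A v) ` hd_arc A) \<le> s (tl_arc A) \<longleftrightarrow> satisfies s A"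
    if "A \<in> As" for A
  proof -
    have "finite (hd_arc A)" "hd_arc A \<noteq> {}"
      using assms that unfolding hytn_def by (auto intro: finite_subset)
    then show ?thesis unfolding satisfies_def by (simp add: Min_le_iff)
  qed
  then show ?thesis unfolding feasible_def by auto
qed

lemma satisfies_lower:
  assumes "satisfies s' A" "\<And>x. s x \<le> s' x" "s (tl_arc A) = s' (tl_arc A)"
  shows "satisfies s A"
  using assms unfolding satisfies_def by (smt (verit))

lemma satisfies_shift: "satisfies (\<lambda>x. s x + c) A \<longleftrightarrow> satisfies s A"
  unfolding satisfies_def by simp

lemma cycle_out_arc:
  assumes "is_cycle V As S C" "v \<in> S"
  shows "out_arc C v \<in> C" "tl_arc (out_arc C v) = v" "hd_arc (out_arc C v) \<subseteq> S"
proof -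
  have "\<exists>!A. A \<in> C \<and> tl_arc A = v" using assms unfolding is_cycle_def by blast
  then have *: "out_arc C v \<in> C \<and> tl_arc (out_arc C v) = v"
    unfolding out_arc_def by (rule theI')
  then show "out_arc C v \<in> C" "tl_arc (out_arc C v) = v" by simp_all
  show "hd_arc (out_arc C v) \<subseteq> S" using * assms(1) unfolding is_cycle_def by blast
qed

lemma seq_weight_ge_telescope:
  assumes "vs \<noteq> []"
    and "\<And>i. Suc i < length vs \<Longrightarrow>
           s (vs ! Suc i) - wt_arc (out_arc C (vs ! i)) (vs ! Suc i) \<le> s (vs ! i)"
  shows "s (last vs) - s (hd vs) \<le> seq_weight C vs"
proof -
  have "s (last vs) - s (hd vs) = (\<Sum>i<length vs - 1. s (vs ! Suc i) - s (vs ! i))"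
    using assms(1) sum_lessThan_telescope[of "\<lambda>i. s (vs ! i)" "length vs - 1"]
    by (simp add: last_conv_nth hd_conv_nth)
  also have "\<dots> \<le> seq_weight C vs"
    unfolding seq_weight_def using assms(2) by (intro sum_mono) (simp add: algebra_simps)
  finally show ?thesis .
qed

lemma iterates_cycle:
  assumes "finite S" "f ` S \<subseteq> S" "v \<in> S"
  obtains I J where "I < J" "(f ^^ I) v = (f ^^ J) v" "inj_on (\<lambda>k. (f ^^ k) v) {I..<J}"
proof -
  define x where "x k = (f ^^ k) v" for k
  have xS: "x k \<in> S" for k by (induction k) (use assms in \<open>auto simp: x_def\<close>)
  have "\<not> inj_on x {..card S}"
  proof
    assume "inj_on x {..card S}"
    then have "card (x ` {..card S}) = Suc (card S)" by (simp add: card_image)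
    moreover have "card (x ` {..card S}) \<le> card S" using xS assms(1) by (intro card_mono) auto
    ultimately show False by simp
  qed
  then have ex: "\<exists>j. \<exists>i<j. x i = x j"
    unfolding inj_on_def by (metis linorder_neqE_nat)
  define J where "J = (LEAST j. \<exists>i<j. x i = x j)"
  obtain I where "I < J" "x I = x J" using LeastI_ex[OF ex] unfolding J_def by blast
  moreover have "inj_on x {I..<J}"
    using not_less_Least[of _ "\<lambda>j. \<exists>i<j. x i = x j", folded J_def]
    unfolding inj_on_def by (metis atLeastLessThan_iff linorder_neqE_nat)
  ultimately show ?thesis using that unfolding x_def by blast
qed

lemma satisfied_cycle_has_nonneg_seq:
  assumes "finite S" "is_cycle V As S C" "\<forall>A\<in>C. satisfies s A"
  shows "\<exists>vs. cyclic_seq S C vs \<and> seq_weight C vs \<ge> 0"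
proof -
  define nxt where
    "nxt v = (SOME u. u \<in> hd_arc (out_arc C v) \<and> s u - wt_arc (out_arc C v) u \<le> s v)" for v
  have nxt: "nxt v \<in> hd_arc (out_arc C v)" "s (nxt v) - wt_arc (out_arc C v) (nxt v) \<le> s v"
    if "v \<in> S" for v
  proof -
    have "satisfies s (out_arc C v)" using assms(3) cycle_out_arc[OF assms(2) that] by blast
    then have "\<exists>u. u \<in> hd_arc (out_arc C v) \<and> s u - wt_arc (out_arc C v) u \<le> s v"
      using cycle_out_arc(2)[OF assms(2) that] unfolding satisfies_def by metis
    then show "nxt v \<in> hd_arc (out_arc C v)" "s (nxt v) - wt_arc (out_arc C v) (nxt v) \<le> s v"
      unfolding nxt_def by (metis (mono_tags, lifting) someI_ex)+
  qed
  have nxtS: "nxt ` S \<subseteq> S" using nxt(1) cycle_out_arc(3)[OF assms(2)] by blast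
  obtain v0 where v0: "v0 \<in> S" using assms(2) unfolding is_cycle_def by blast
  define x where "x k = (nxt ^^ k) v0" for k
  have xS: "x k \<in> S" for k by (induction k) (use v0 nxtS in \<open>auto simp: x_def\<close>)
  obtain I J where IJ: "I < J" "x I = x J" and inj: "inj_on x {I..<J}"
    using iterates_cycle[OF assms(1) nxtS v0] unfolding x_def by blast
  define vs where "vs = map x [I..<Suc J]"
  have vs_nth: "vs ! k = x (I + k)" if "k < length vs" for k
    using that IJ unfolding vs_def by (simp del: upt_Suc)
  have step: "vs ! Suc k = nxt (vs ! k)" if "Suc k < length vs" for k
    using that vs_nth by (simp add: x_def)
  have cyc: "cyclic_seq S C vs"
    unfolding cyclic_seq_def
  proof (intro conjI allI impI)
    show "2 \<le> length vs" "set vs \<subseteq> S" "last vs = hd vs"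
      using IJ xS unfolding vs_def by (auto simp: last_map hd_map)
    have "butlast vs = map x [I..<J]" unfolding vs_def using IJ by (simp add: map_butlast)
    then show "distinct (butlast vs)" using inj by (simp add: distinct_map)
    show "vs ! (k + 1) \<in> hd_arc (out_arc C (vs ! k))" if "k + 1 < length vs" for k
      using that step nxt(1) vs_nth xS by simp
  qed
  moreover have "0 \<le> seq_weight C vs"
  proof -
    have "vs \<noteq> []" "last vs = hd vs" using cyc unfolding cyclic_seq_def by auto
    moreover have "vs ! k \<in> S" if "k < length vs" for k using that vs_nth xS by simp
    ultimately show ?thesis
      using seq_weight_ge_telescope[of vs s C] step nxt(2) by fastforce
  qed
  ultimately show ?thesis by blast
qed

definition additive_subgroup :: "real set \<Rightarrow> bool" where
  "additive_subgroup K \<longleftrightarrow> 0 \<in> K \<and> (\<forall>a\<in>K. \<forall>b\<in>K. a + b \<in> K \<and> a - b \<in> K)"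

lemma additive_subgroupD:
  assumes "additive_subgroup K"
  shows "0 \<in> K" "a \<in> K \<Longrightarrow> b \<in> K \<Longrightarrow> a + b \<in> K" "a \<in> K \<Longrightarrow> b \<in> K \<Longrightarrow> a - b \<in> K"
  using assms unfolding additive_subgroup_def by auto

definition schedulable_in :: "real set \<Rightarrow> 'a hyperarc set \<Rightarrow> bool" where
  "schedulable_in K As \<longleftrightarrow> (\<exists>s. range s \<subseteq> K \<and> (\<forall>A\<in>As. satisfies s A))"

lemma schedulable_in_merge_same_tail:
  assumes K: "additive_subgroup K"
    and "A1 \<noteq> A2" "tl_arc A1 = tl_arc A2"
    and "schedulable_in K (As - {A1})" "schedulable_in K (As - {A2})"
  shows "schedulable_in K As"
proof -
  obtain s1 where s1: "range s1 \<subseteq> K" "\<forall>B\<in>As - {A2}. satisfies s1 B"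
    using assms(5) unfolding schedulable_in_def by blast
  obtain s2 where s2: "range s2 \<subseteq> K" "\<forall>B\<in>As - {A1}. satisfies s2 B"
    using assms(4) unfolding schedulable_in_def by blast
  define t where "t = tl_arc A1"
  define s2' where "s2' x = s2 x + (s1 t - s2 t)" for x
  have s2': "\<forall>B\<in>As - {A1}. satisfies s2' B"
    using s2(2) satisfies_shift[of s2] unfolding s2'_def by blast
  define s where "s x = min (s1 x) (s2' x)" for x
  have "satisfies s B" if "B \<in> As" for B
  proof (cases "s1 (tl_arc B) \<le> s2' (tl_arc B) \<and> B \<noteq> A2")
    case True
    then show ?thesis using satisfies_lower[of s1 B s] s1(2) \<open>B \<in> As\<close> by (simp add: s_def)
  next
    case False
    moreover have "s1 t = s2' t" by (simp add: s2'_def)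
    ultimately have "s2' (tl_arc B) \<le> s1 (tl_arc B)" "B \<noteq> A1"
      using assms(2,3) unfolding t_def by auto
    then show ?thesis using satisfies_lower[of s2' B s] s2' \<open>B \<in> As\<close> by (simp add: s_def)
  qed
  moreover have "range s \<subseteq> K"
    using s1(1) s2(1) additive_subgroupD[OF K] by (auto simp: s_def s2'_def min_def image_subset_iff)
  ultimately show ?thesis unfolding schedulable_in_def by blast
qed

lemma schedulable_in_free_head:
  assumes K: "additive_subgroup K"
    and A: "A \<in> As" "v \<in> hd_arc A" "v \<notin> tl_arc ` As" "wt_arc A v \<in> K"
    and "schedulable_in K (As - {A})"
  shows "schedulable_in K As"
proof -
  obtain s' where s': "range s' \<subseteq> K" "\<forall>B\<in>As - {A}. satisfies s' B"
    using assms(6) unfolding schedulable_in_def by blast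
  define s where "s = s'(v := min (s' v) (s' (tl_arc A) + wt_arc A v))"
  have tails: "s (tl_arc B) = s' (tl_arc B)" if "B \<in> As" for B
    using A(3) that by (auto simp: s_def)
  have "satisfies s B" if "B \<in> As" for B
  proof (cases "B = A")
    case True
    then show ?thesis
      using A tails[OF \<open>B \<in> As\<close>] unfolding satisfies_def by (intro bexI[of _ v]) (auto simp: s_def)
  next
    case False
    then show ?thesis using satisfies_lower[of s' B s] s'(2) tails that by (simp add: s_def)
  qed
  moreover have "range s \<subseteq> K"
    using s'(1) A(4) additive_subgroupD[OF K] by (auto simp: s_def min_def image_subset_iff)
  ultimately show ?thesis unfolding schedulable_in_def by blast
qed

lemma satisfies_glue:
  assumes "\<forall>B\<in>As. tl_arc B \<in> Z \<longrightarrow> (\<exists>v\<in>hd_arc B \<inter> Z. p v - wt_arc B v \<le> p (tl_arc B))"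
    and "\<forall>B\<in>As. tl_arc B \<notin> Z \<longrightarrow> satisfies s B"
    and "\<forall>y\<in>Z. p y + c \<le> s y"
  shows "\<forall>B\<in>As. satisfies (\<lambda>y. if y \<in> Z then p y + c else s y) B"
proof
  fix B assume "B \<in> As"
  let ?s = "\<lambda>y. if y \<in> Z then p y + c else s y"
  show "satisfies ?s B"
  proof (cases "tl_arc B \<in> Z")
    case True
    then show ?thesis using assms(1) \<open>B \<in> As\<close> unfolding satisfies_def by force
  next
    case False
    then show ?thesis using satisfies_lower[of s B ?s] assms(2,3) \<open>B \<in> As\<close> by simp
  qed
qed

lemma cyclic_seq_potential:
  assumes cyc: "cyclic_seq S C vs" and nonneg: "0 \<le> seq_weight C vs"
    and K: "additive_subgroup K"
    and wK: "\<And>i. Suc i < length vs \<Longrightarrow> wt_arc (out_arc C (vs ! i)) (vs ! Suc i) \<in> K"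
  obtains p where "range p \<subseteq> K"
    "\<forall>y\<in>set vs. \<exists>v\<in>hd_arc (out_arc C y) \<inter> set vs. p v - wt_arc (out_arc C y) v \<le> p y"
proof -
  define q where "q = length vs - 1"
  have len: "length vs = Suc q" "0 < q" using cyc unfolding cyclic_seq_def q_def by auto
  define w where "w k = wt_arc (out_arc C (vs ! k)) (vs ! Suc k)" for k
  define g where "g j = (\<Sum>k<j. w k)" for j
  have gK: "g j \<in> K" if "j \<le> q" for j
    using that by (induction j) (auto simp: g_def w_def len intro!: additive_subgroupD[OF K] wK)
  have wrap: "vs ! q = vs ! 0"
  proof -
    have "vs \<noteq> []" using len by auto
    then show ?thesis using cyc len last_conv_nth[of vs] hd_conv_nth[of vs]
      unfolding cyclic_seq_def by simp
  qed
  have inj: "inj_on ((!) vs) {..<q}"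
  proof -
    have "distinct (butlast vs)" "length (butlast vs) = q"
      using cyc len unfolding cyclic_seq_def by simp_all
    then show ?thesis
      unfolding inj_on_def by (metis lessThan_iff nth_butlast nth_eq_iff_index_eq)
  qed
  have set_vs: "set vs = (!) vs ` {..<q}"
  proof -
    have "set vs = (!) vs ` {..q}" using len by (auto simp: set_conv_nth)
    also have "\<dots> = (!) vs ` {..<q}" using wrap len(2) by (auto simp: atMost_nat_numeral le_less)
    finally show ?thesis .
  qed
  define p where "p y = (if y \<in> set vs then g (the_inv_into {..<q} ((!) vs) y) else 0)" for y
  have p_nth: "p (vs ! j) = g j" if "j < q" for j
    using that len the_inv_into_f_f[OF inj] unfolding p_def by simp
  have "p y \<in> K" for y
  proof (cases "y \<in> set vs")
    case True
    then obtain j where "j < q" "y = vs ! j" using set_vs by auto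
    then show ?thesis using p_nth gK by simp
  next
    case False
    then show ?thesis by (simp add: p_def additive_subgroupD(1)[OF K])
  qed
  then have "range p \<subseteq> K" by blast
  moreover have "\<exists>v\<in>hd_arc (out_arc C y) \<inter> set vs. p v - wt_arc (out_arc C y) v \<le> p y"
    if "y \<in> set vs" for y
  proof -
    obtain j where j: "j < q" "y = vs ! j" using \<open>y \<in> set vs\<close> set_vs by auto
    have head: "vs ! Suc j \<in> hd_arc (out_arc C y) \<inter> set vs"
      using cyc j len unfolding cyclic_seq_def by simp
    have "p (vs ! Suc j) \<le> g j + w j"
    proof (cases "Suc j < q")
      case True
      then show ?thesis using p_nth by (simp add: g_def)
    next
      case False
      \<comment> \<open>closing arc: here non-negativity of the total weight is used\<close>
      then have "Suc j = q" using j by simp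
      moreover have "seq_weight C vs = g q" unfolding seq_weight_def g_def w_def q_def by simp
      ultimately show ?thesis using nonneg wrap p_nth[OF len(2)] by (auto simp: g_def)
    qed
    then show ?thesis using head j p_nth w_def by (intro bexI[of _ "vs ! Suc j"]) auto
  qed
  ultimately show ?thesis using that by blast
qed

lemma negative_cycle_mono:
  "As' \<subseteq> As \<Longrightarrow> negative_cycle V As' S C \<Longrightarrow> negative_cycle V As S C"
  unfolding negative_cycle_def is_cycle_def by (meson subset_trans)

lemma schedulable_in_closed:
  assumes K: "additive_subgroup K"
    and wK: "\<forall>A\<in>As. \<forall>v\<in>hd_arc A. wt_arc A v \<in> K"
    and tails: "\<forall>A\<in>As. \<forall>B\<in>As. tl_arc A = tl_arc B \<longrightarrow> A = B"
    and heads: "\<forall>A\<in>As. hd_arc A \<subseteq> tl_arc ` As"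
    and "As \<noteq> {}"
    and noneg: "\<not> negative_cycle V As (tl_arc ` As) As"
    and IH: "\<And>As'. As' \<subset> As \<Longrightarrow> schedulable_in K As'"
  shows "schedulable_in K As"
proof -
  let ?T = "tl_arc ` As"
  have cyc: "is_cycle V As ?T As"
    unfolding is_cycle_def
  proof (intro conjI ballI)
    show "?T = (\<Union>A\<in>As. hd_arc A \<union> {tl_arc A})" using heads by blast
    show "\<exists>!A. A \<in> As \<and> tl_arc A = v" if "v \<in> ?T" for v using that tails by blast
  qed (use \<open>As \<noteq> {}\<close> in auto)
  then obtain vs where vs: "cyclic_seq ?T As vs" "0 \<le> seq_weight As vs"
    using noneg unfolding negative_cycle_def by (auto simp: not_less)
  let ?Z = "set vs"
  have ZT: "?Z \<subseteq> ?T" and "?Z \<noteq> {}" using vs(1) unfolding cyclic_seq_def by auto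
  have out: "out_arc As (tl_arc B) = B" if "B \<in> As" for B
    using cycle_out_arc[OF cyc] tails that by blast
  have "wt_arc (out_arc As (vs ! i)) (vs ! Suc i) \<in> K" if "Suc i < length vs" for i
  proof -
    have "vs ! i \<in> ?T" using ZT that by auto
    then show ?thesis
      using wK cycle_out_arc(1)[OF cyc] vs(1) that unfolding cyclic_seq_def by simp
  qed
  then obtain p where p: "range p \<subseteq> K"
    "\<forall>y\<in>?Z. \<exists>v\<in>hd_arc (out_arc As y) \<inter> ?Z. p v - wt_arc (out_arc As y) v \<le> p y"
    using cyclic_seq_potential[OF vs K] by blast
  have sub: "{B \<in> As. tl_arc B \<notin> ?Z} \<subset> As"
  proof -
    obtain B where "B \<in> As" "tl_arc B \<in> ?Z"
      using ZT \<open>?Z \<noteq> {}\<close> by (metis ex_in_conv image_iff subsetD)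
    then show ?thesis by blast
  qed
  then obtain s where s: "range s \<subseteq> K" "\<forall>B\<in>As. tl_arc B \<notin> ?Z \<longrightarrow> satisfies s B"
    using IH[OF sub] unfolding schedulable_in_def by blast
  define c where "c = Min (insert 0 ((\<lambda>y. s y - p y) ` ?Z))"
  have "c \<le> s y - p y" if "y \<in> ?Z" for y
    unfolding c_def using that by (intro Min_le) auto
  then have c_le: "\<forall>y\<in>?Z. p y + c \<le> s y" by (simp add: le_diff_eq add.commute)
  have "c \<in> insert 0 ((\<lambda>y. s y - p y) ` ?Z)" unfolding c_def by (intro Min_in) auto
  then have "c \<in> K" using s(1) p(1) additive_subgroupD[OF K] by (auto simp: image_subset_iff)
  then have "range (\<lambda>y. if y \<in> ?Z then p y + c else s y) \<subseteq> K"
    using s(1) p(1) additive_subgroupD[OF K] by (auto simp: image_subset_iff)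
  moreover have "\<forall>B\<in>As. satisfies (\<lambda>y. if y \<in> ?Z then p y + c else s y) B"
  proof (rule satisfies_glue[OF _ s(2) c_le])
    show "\<forall>B\<in>As. tl_arc B \<in> ?Z \<longrightarrow> (\<exists>v\<in>hd_arc B \<inter> ?Z. p v - wt_arc B v \<le> p (tl_arc B))"
      using p(2) out by metis
  qed
  ultimately show ?thesis unfolding schedulable_in_def by blast
qed

lemma schedulable_in_if_no_negative_cycle:
  assumes "finite As" and K: "additive_subgroup K"
    and "\<forall>A\<in>As. \<forall>v\<in>hd_arc A. wt_arc A v \<in> K"
    and "\<nexists>S C. negative_cycle V As S C"
  shows "schedulable_in K As"
  using assms(1,3,4)
proof (induction As rule: finite_psubset_induct)
  case (psubset As)
  have IH: "schedulable_in K As'" if "As' \<subset> As" for As'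
  proof -
    have "\<not> negative_cycle V As' S C" for S C
      using psubset.prems(2) negative_cycle_mono[of As' As] that by blast
    then show ?thesis using psubset.IH[OF that] psubset.prems(1) that by blast
  qed
  show ?case
  proof (cases "\<exists>A1\<in>As. \<exists>A2\<in>As. A1 \<noteq> A2 \<and> tl_arc A1 = tl_arc A2")
    case True
    then obtain A1 A2 where "A1 \<in> As" "A2 \<in> As" "A1 \<noteq> A2" "tl_arc A1 = tl_arc A2" by blast
    moreover from this have "As - {A1} \<subset> As" "As - {A2} \<subset> As" by auto
    ultimately show ?thesis using schedulable_in_merge_same_tail[OF K] IH by metis
  next
    case tails: False
    show ?thesis
    proof (cases "\<exists>A\<in>As. \<exists>v\<in>hd_arc A. v \<notin> tl_arc ` As")
      case True
      then obtain A v where A: "A \<in> As" "v \<in> hd_arc A" "v \<notin> tl_arc ` As" by blast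
      then have "As - {A} \<subset> As" by auto
      then show ?thesis
        using schedulable_in_free_head[OF K A] IH psubset.prems(1) A by blast
    next
      case heads: False
      show ?thesis
      proof (cases "As = {}")
        case True
        then show ?thesis
          using additive_subgroupD(1)[OF K] unfolding schedulable_in_def by auto
      next
        case False
        then show ?thesis
          using schedulable_in_closed[OF K psubset.prems(1) _ _ _ _ IH] tails heads
            psubset.prems(2) by blast
      qed
    qed
  qed
qed

lemma satisfiable_imp_conservative:
  assumes "hytn V As" "\<forall>A\<in>As. satisfies s A"
  shows "conservative V As"
  unfolding conservative_def negative_cycle_def
proof (intro notI, elim exE conjE)
  fix S C
  assume cyc: "is_cycle V As S C" and neg: "\<forall>vs. cyclic_seq S C vs \<longrightarrow> seq_weight C vs < 0"
  have "S \<subseteq> V" using cyc assms(1) unfolding is_cycle_def hytn_def by blast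
  then have "finite S" using assms(1) finite_subset unfolding hytn_def by blast
  moreover have "\<forall>A\<in>C. satisfies s A" using cyc assms(2) unfolding is_cycle_def by blast
  ultimately show False using satisfied_cycle_has_nonneg_seq[OF _ cyc] neg by fastforce
qed

lemma schedulable_in_iff_conservative:
  assumes "hytn V As" "additive_subgroup K" "\<forall>A\<in>As. \<forall>v\<in>hd_arc A. wt_arc A v \<in> K"
  shows "schedulable_in K As \<longleftrightarrow> conservative V As"
proof
  show "schedulable_in K As \<Longrightarrow> conservative V As"
    using satisfiable_imp_conservative[OF assms(1)] unfolding schedulable_in_def by blast
  show "conservative V As \<Longrightarrow> schedulable_in K As"
    using schedulable_in_if_no_negative_cycle[OF _ assms(2,3)] assms(1)
    unfolding conservative_def hytn_def by blast
qed

lemma consistent_iff_schedulable_in_UNIV: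
  assumes "hytn V As"
  shows "consistent V As \<longleftrightarrow> schedulable_in UNIV As"
  unfolding consistent_def schedulable_in_def feasible_iff_satisfies[OF assms] by simp

lemma int_consistent_iff_schedulable_in_Ints:
  assumes "hytn V As"
  shows "int_consistent V As \<longleftrightarrow> schedulable_in \<int> As"
proof
  assume "int_consistent V As"
  then show "schedulable_in \<int> As"
    unfolding int_consistent_def schedulable_in_def feasible_iff_satisfies[OF assms]
    by (metis Ints_of_int image_subset_iff)
next
  assume "schedulable_in \<int> As"
  then obtain s where s: "range s \<subseteq> \<int>" "\<forall>A\<in>As. satisfies s A"
    unfolding schedulable_in_def by blast
  have "(\<lambda>v. real_of_int \<lfloor>s v\<rfloor>) = s"
    using s(1) by (auto elim!: Ints_cases simp: image_subset_iff)
  then show "int_consistent V As"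
    unfolding int_consistent_def using s(2) feasible_iff_satisfies[OF assms] by metis
qed

theorem mainTheorem6:
  fixes V :: "'a set" and As :: "'a hyperarc set"
  assumes "hytn V As"
  shows "(consistent V As \<longleftrightarrow> conservative V As) \<and>
         ((\<forall>A\<in>As. \<forall>v\<in>hd_arc A. wt_arc A v \<in> \<int>) \<longrightarrow>
            (int_consistent V As \<longleftrightarrow> conservative V As))"
proof (intro conjI impI)
  have "additive_subgroup UNIV" "additive_subgroup \<int>"
    unfolding additive_subgroup_def by auto
  then show "consistent V As \<longleftrightarrow> conservative V As"
    and "\<forall>A\<in>As. \<forall>v\<in>hd_arc A. wt_arc A v \<in> \<int> \<Longrightarrow> int_consistent V As \<longleftrightarrow> conservative V As"
    using schedulable_in_iff_conservative[OF assms] consistent_iff_schedulable_in_UNIV[OF assms]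
      int_consistent_iff_schedulable_in_Ints[OF assms] by simp_all
qed

end
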